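(* Let $d\in\mathbb R$ with $d>2$ and let \[ \mathsf s_d=\frac4{d(d-2)}\Big(\frac{\Gamma\big(\frac{d+1}2\big)}{\sqrt\pi\,\Gamma\big(\frac d2\big)}\Big)^{2/d}. \] For every nonnegative smooth function $u$ on $[0,\infty)$ with compact support, writing $v=u^{\frac{d+2}{d-2}}$, \[ 0\le \mathsf s_d\Big(\int_0^\infty u^{\frac{2d}{d-2}}r^{d-1}dr\Big)^{1+\frac2d}-\int_0^\infty v\,\big((-\Delta)^{-1}v\big)\,r^{d-1}dr \] and \[ \mathsf s_d\Big(\int_0^\infty u^{\frac{2d}{d-2}}r^{d-1}dr\Big)^{1+\frac2d}-\int_0^\infty v\,\big((-\Delta)^{-1}v\big)\,r^{d-1}dr\le \mathsf c_d\Big(\int_0^\infty u^{\frac{2d}{d-2}}r^{d-1}dr\Big)^{\frac4d}\Big[\mathsf s_d\int_0^\infty|u'|^2r^{d-1}dr-\Big(\int_0^\infty u^{\frac{2d}{d-2}}r^{d-1}dr\Big)^{\frac{d-2}d}\Big] \] holds with $\mathsf c_d=\mathsf s_d$; in particular the optimal constant $\mathsf c_d$ in the second inequality satisfies $\mathsf c_d\le\mathsf s_d$.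
   Context: For a function $v$ on $(0,\infty)$ and real $d>2$, $(-\Delta)^{-1}v$ denotes the function $w(r)=\int_r^\infty s^{1-d}\int_0^s v(t)\,t^{d-1}\,dt\,ds$, i.e. the solution of $w''+\frac{d-1}{r}w'+v=0$ decaying at infinity. *)

theory Defs
  imports "HOL-Analysis.Analysis"
begin

definition sd :: "real \<Rightarrow> real" where
  "sd d = 4 / (d * (d - 2)) * (Gamma ((d + 1) / 2) / (sqrt pi * Gamma (d / 2))) powr (2 / d)"

definition smooth_halfline :: "(real \<Rightarrow> real) \<Rightarrow> bool" where
  "smooth_halfline u \<longleftrightarrow>
     (\<exists>D :: nat \<Rightarrow> real \<Rightarrow> real. (\<forall>x\<ge>0. D 0 x = u x) \<and>
        (\<forall>n x. x \<ge> 0 \<longrightarrow> (D n has_real_derivative D (Suc n) x) (at x within {0..})))"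

definition compact_support_halfline :: "(real \<Rightarrow> real) \<Rightarrow> bool" where
  "compact_support_halfline u \<longleftrightarrow> (\<exists>R. \<forall>r\<ge>R. u r = 0)"

definition inv_lap :: "real \<Rightarrow> (real \<Rightarrow> real) \<Rightarrow> real \<Rightarrow> real" where
  "inv_lap d v r = (LINT s:{r<..}|lborel. s powr (1 - d) * (LINT t:{0<..<s}|lborel. v t * t powr (d - 1)))"

end

theory Submission
  imports Defs
begin

text \<open>
  Let \<open>m(r) = \<integral>\<^sub>0\<^sup>r v(t) t^(d-1) dt\<close> and \<open>h = r^(1-d) m\<close>, so that \<open>w = (-\<Delta>)\<^sup>-\<^sup>1 v\<close> has
  \<open>w' = -h\<close>. Integrating by parts, \<open>J = \<integral> v w r^(d-1) = \<integral> h\<^sup>2 r^(d-1)\<close> and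
  \<open>\<integral> u' m = -N\<close>; hence expanding \<open>\<integral> (\<alpha> u' + h)\<^sup>2 r^(d-1) \<ge> 0\<close> at \<open>\<alpha> = s_d N^(2/d)\<close> gives the
  second inequality.

  The first one, \<open>J \<le> s_d N^(1+2/d)\<close>, is the radial Hardy-Littlewood-Sobolev inequality.
  Hoelder gives \<open>J \<le> N^((d+2)/2d) W^((d-2)/2d)\<close> with \<open>W = \<integral> w^q r^(d-1)\<close>, and it remains to
  prove the sharp radial Sobolev inequality \<open>J \<ge> d(d-2)/4 C^(2/d) W^((d-2)/d)\<close>. This is done
  by calibration: let \<open>f = r^\<gamma> w\<close> with \<open>\<gamma> = (d-2)/2\<close>, let \<open>M\<close> be the maximum of \<open>f\<close> and
  \<open>\<phi>(y) = \<gamma> y sqrt(1 - (y/M)^\<kappa>)\<close>. Completing a square gives, for either sign \<open>\<sigma> = \<plusminus>1\<close>,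
  \<open>h\<^sup>2 r^(d-1) - \<gamma>\<^sup>2 M^(-\<kappa>) w^q r^(d-1) \<ge> (2\<sigma>\<phi>(f) - 2\<gamma>f) f'\<close>, an exact derivative. Integrating
  with \<open>\<sigma> = 1\<close> up to the maximum point and \<open>\<sigma> = -1\<close> beyond it yields
  \<open>J \<ge> \<gamma> C M\<^sup>2 + \<gamma>\<^sup>2 M^(-\<kappa>) W\<close>, where \<open>C = 4 \<integral>\<^sub>0\<^sup>1 x sqrt(1 - x^\<kappa>) dx\<close> is a Beta integral, and
  AM-GM eliminates \<open>M\<close>.
\<close>

lemma continuous_on_has_integral:
  fixes f :: "real \<Rightarrow> real"
  shows "continuous_on {a..b} f \<Longrightarrow> (f has_integral integral {a..b} f) {a..b}"
  by (rule integrable_integral[OF integrable_continuous_real])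

lemma integral_Ioc_eq_Icc:
  fixes f :: "real \<Rightarrow> real"
  shows "integral {a<..b} f = integral {a..b} f"
  by (rule integral_spike_set) (auto intro: negligible_subset[of "{a}"])

lemma at_within_Icc_eq_atLeast:
  fixes x X :: real
  assumes "0 \<le> x" "x < X"
  shows "at x within {0..X} = at x within {0..}"
  by (rule at_within_nhd[of x "{..<X}"]) (use assms in auto)

lemma set_integral_powr_Ioi:
  fixes e X :: real
  assumes "e < -1" "X > 0"
  shows "set_integrable lborel {X<..} (\<lambda>s. s powr e)"
    and "(LINT s:{X<..}|lborel. s powr e) = -(X powr (e + 1)) / (e + 1)"
proof -
  have hi: "((\<lambda>x. x powr e) has_integral -(X powr (e + 1)) / (e + 1)) {X..}"
    using has_integral_powr_to_inf[OF assms] .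
  have "(\<lambda>x. x powr e) absolutely_integrable_on {X..}"
    using hi by (intro nonnegative_absolutely_integrable_1) (auto simp: integrable_on_def)
  moreover have "(\<lambda>x. indicator {X..} x *\<^sub>R (x powr e)) \<in> borel_measurable lborel"
    by measurable
  ultimately have "set_integrable lborel {X..} (\<lambda>s. s powr e)"
    unfolding set_integrable_def using integrable_completion by blast
  then show si: "set_integrable lborel {X<..} (\<lambda>s. s powr e)"
    by (rule set_integrable_subset) auto
  have "(LINT s:{X<..}|lborel. s powr e) = integral {X<..} (\<lambda>s. s powr e)"
    using set_borel_integral_eq_integral(2)[OF si] .
  also have "\<dots> = integral {X..} (\<lambda>s. s powr e)"
    by (rule integral_spike_set) (auto intro: negligible_subset[of "{X}"])
  also have "\<dots> = -(X powr (e + 1)) / (e + 1)"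
    using hi by (rule integral_unique)
  finally show "(LINT s:{X<..}|lborel. s powr e) = -(X powr (e + 1)) / (e + 1)" .
qed

lemma set_integral_Ioi_eq_integral_Icc:
  fixes F G :: "real \<Rightarrow> real"
  assumes R: "R > 0" and G: "continuous_on {0..R} G"
    and FG: "\<And>r. 0 < r \<Longrightarrow> r \<le> R \<Longrightarrow> F r = G r"
    and F0: "\<And>r. r > R \<Longrightarrow> F r = 0"
  shows "(LINT r:{0<..}|lborel. F r) = integral {0..R} G"
proof -
  have iG: "set_integrable lborel {0<..R} G"
    by (rule set_integrable_subset[OF borel_integrable_atLeastAtMost'[OF G]]) auto
  have iF: "set_integrable lborel {0<..R} F"
    using set_integrable_cong[of lborel lborel "{0<..R}" "{0<..R}" F G] iG FG by auto
  have iF': "set_integrable lborel {R<..} F"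
    using set_integrable_cong[of lborel lborel "{R<..}" "{R<..}" F "\<lambda>_. 0"] F0
    by (auto simp: set_integrable_def)
  have U: "{0<..} = {0<..R} \<union> {R<..}" using R by auto
  have "(LINT r:{0<..}|lborel. F r) = (LINT r:{0<..R}|lborel. F r) + (LINT r:{R<..}|lborel. F r)"
    unfolding U by (rule set_integral_Un[OF _ iF iF']) auto
  also have "(LINT r:{R<..}|lborel. F r) = 0"
    using set_lebesgue_integral_cong[of "{R<..}" lborel F "\<lambda>_. 0"] F0 by auto
  also have "(LINT r:{0<..R}|lborel. F r) = (LINT r:{0<..R}|lborel. G r)"
    by (rule set_lebesgue_integral_cong) (auto simp: FG)
  also have "\<dots> = integral {0..R} G"
    using set_borel_integral_eq_integral(2)[OF iG] integral_Ioc_eq_Icc by simp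
  finally show ?thesis by simp
qed

lemma Gamma_three_halves: "Gamma (3/2 :: real) = sqrt pi / 2"
proof -
  have "Gamma ((1/2 :: real) + 1) = 1/2 * Gamma (1/2)"
    by (rule Gamma_plus1) auto
  then show ?thesis
    by (simp add: Gamma_one_half_real)
qed

lemma has_integral_Beta_bump:
  fixes k :: real
  assumes k: "k > 0"
  shows "((\<lambda>x. x * sqrt (1 - x powr k)) has_integral Beta (2 / k) (3 / 2) / k) {0..1}"
proof -
  let ?f = "\<lambda>x::real. x * sqrt (1 - x powr k)"
  let ?g = "\<lambda>y::real. y powr (1 / k)"
  let ?g' = "\<lambda>y::real. (1 / k) * y powr (1 / k - 1)"
  have cf: "continuous_on {0..1} ?f"
    using k by (intro continuous_intros continuous_on_powr') auto
  have "((\<lambda>y. ?g' y *\<^sub>R ?f (?g y)) has_integral integral {?g 0..?g 1} ?f) {0..1}"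
  proof (rule has_integral_substitution_strong[of "{0}" 0 1 ?g 0 1 ?f ?g'])
    show "?g ` {0..1} \<subseteq> {0..1}"
      using k powr_mono2[of "1 / k" _ 1] by fastforce
    show "continuous_on {0..1} ?g"
      using k by (intro continuous_on_powr' continuous_intros) auto
    show "(?g has_field_derivative ?g' x) (at x within {0..1})" if "x \<in> {0..1} - {0}" for x
      using that by (auto intro!: derivative_eq_intros)
  qed (use cf in auto)
  moreover have "((\<lambda>y. ?g' y *\<^sub>R ?f (?g y)) has_integral (1 / k) * Beta (2 / k) (3 / 2)) {0..1}"
  proof (rule has_integral_eq[OF _ has_integral_mult_right[OF has_integral_Beta_real]])
    fix y :: real assume y: "y \<in> {0..1}"
    show "(1 / k) * (y powr (2 / k - 1) * (1 - y) powr (3 / 2 - 1)) = ?g' y *\<^sub>R ?f (?g y)"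
    proof (cases "y = 0")
      case False
      then have "y > 0" using y by auto
      moreover have "(1 - y) powr (3 / 2 - 1) = sqrt (1 - y)"
        using y by (simp add: powr_half_sqrt)
      moreover have "y powr (2 / k - 1) = y powr (1 / k - 1) * y powr (1 / k)"
        by (simp add: powr_add[symmetric])
      ultimately show ?thesis
        using k by (simp add: powr_powr algebra_simps)
    qed simp
  qed (use k in auto)
  ultimately have "integral {0..1} ?f = Beta (2 / k) (3 / 2) / k"
    by (simp add: has_integral_unique)
  then show ?thesis
    using integrable_integral[OF integrable_continuous_real[OF cf]] by simp
qed

lemma Beta_half_shift_three_halves:
  fixes d :: real
  assumes d: "d > 2"
  shows "Beta ((d - 2) / 2) (3 / 2) * (d - 2) = sqrt pi * Gamma (d / 2) / Gamma ((d + 1) / 2)"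
proof -
  have "Gamma ((d - 2) / 2 + 1) = (d - 2) / 2 * Gamma ((d - 2) / 2)"
    by (rule Gamma_plus1) (use d in auto)
  moreover have "(d - 2) / 2 + 1 = d / 2"
    by argo
  ultimately have "(d - 2) / 2 * Gamma ((d - 2) / 2) = Gamma (d / 2)"
    by simp
  moreover have "(d - 2) / 2 + 3 / 2 = (d + 1) / 2"
    by argo
  ultimately show ?thesis
    unfolding Beta_altdef rGamma_inverse_Gamma by (simp add: Gamma_three_halves field_simps)
qed

text \<open>Minimising the bound over the free scale \<open>l\<close>; the degenerate cases \<open>A = 0\<close> and
  \<open>B = 0\<close> are handled by letting \<open>l\<close> tend to \<open>\<infinity>\<close> and to \<open>0\<close>, respectively.\<close>
lemma le_Holder_product_of_scaled_bounds:
  fixes p q A B c :: real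
  assumes p: "p > 1" and q: "q > 1" and pq: "1 / p + 1 / q = 1" and A: "A \<ge> 0" and B: "B \<ge> 0"
    and bound: "\<And>l. l > 0 \<Longrightarrow> c \<le> l powr p * A / p + l powr (- q) * B / q"
  shows "c \<le> A powr (1 / p) * B powr (1 / q)"
proof (cases "A = 0 \<or> B = 0")
  case True
  have "c \<le> 0"
  proof (cases "A = 0")
    case True
    have "((\<lambda>l. l powr (- q)) \<longlongrightarrow> 0) at_top"
      by (rule tendsto_neg_powr) (use q in \<open>auto intro: filterlim_ident\<close>)
    then have "((\<lambda>l. l powr p * A / p + l powr (- q) * B / q) \<longlongrightarrow> 0) at_top"
      using True tendsto_mult_right[of _ 0 at_top "B / q"] by simp
    then show ?thesis
      by (rule tendsto_lowerbound) (auto intro!: eventually_mono[OF eventually_gt_at_top[of 0]] bound)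
  next
    case False
    then have B0: "B = 0" using \<open>A = 0 \<or> B = 0\<close> by simp
    have "((\<lambda>l. l powr p) \<longlongrightarrow> 0 powr p) (at_right 0)"
      by (rule tendsto_powr')
         (use p in \<open>auto intro: tendsto_ident_at exI[of _ 1] simp: eventually_at_right_field\<close>)
    then have "((\<lambda>l. l powr p * A / p + l powr (- q) * B / q) \<longlongrightarrow> 0) (at_right 0)"
      using B0 p tendsto_mult_right[of _ 0 "at_right 0" "A / p"] by simp
    then show ?thesis
      by (rule tendsto_lowerbound) (auto intro!: bound exI[of _ 1] simp: eventually_at_right_field)
  qed
  then show ?thesis
    using True by auto
next
  case False
  then have A0: "A > 0" and B0: "B > 0" using A B by auto
  define l where "l = (B / A) powr (1 / (p + q))"
  have pq': "p + q = p * q" using pq p q by (simp add: field_simps)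
  have "l powr p * A = (B / A) powr (1 / q) * A"
    unfolding l_def using pq' p by (simp add: powr_powr)
  also have "\<dots> = A powr (1 / p) * B powr (1 / q)"
    using A0 B0 pq by (simp add: powr_divide powr_diff field_simps flip: powr_add)
  finally have E1: "l powr p * A = A powr (1 / p) * B powr (1 / q)" .
  have "l powr (- q) * B = (B / A) powr (- (1 / p)) * B"
    unfolding l_def using pq' q by (simp add: powr_powr)
  also have "\<dots> = A powr (1 / p) * B powr (1 / q)"
    using A0 B0 pq by (simp add: powr_divide powr_minus powr_diff field_simps flip: powr_add)
  finally have E2: "l powr (- q) * B = A powr (1 / p) * B powr (1 / q)" .
  have "c \<le> l powr p * A / p + l powr (- q) * B / q"
    unfolding l_def by (rule bound) (use A0 B0 in simp)
  also have "\<dots> = A powr (1 / p) * B powr (1 / q) * (1 / p + 1 / q)"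
    using E1 E2 by (simp add: field_simps)
  finally show ?thesis
    using pq by simp
qed

lemma Holder_inequality_continuous:
  fixes F G :: "real \<Rightarrow> real" and p q :: real
  assumes p: "p > 1" and q: "q > 1" and pq: "1 / p + 1 / q = 1"
    and cF: "continuous_on {a..b} F" and cG: "continuous_on {a..b} G"
    and F0: "\<And>x. x \<in> {a..b} \<Longrightarrow> F x \<ge> 0" and G0: "\<And>x. x \<in> {a..b} \<Longrightarrow> G x \<ge> 0"
  shows "integral {a..b} (\<lambda>x. F x * G x)
         \<le> (integral {a..b} (\<lambda>x. F x powr p)) powr (1 / p) * (integral {a..b} (\<lambda>x. G x powr q)) powr (1 / q)"
proof (rule le_Holder_product_of_scaled_bounds[OF p q pq])
  have cFp: "continuous_on {a..b} (\<lambda>x. F x powr p)"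
    using p F0 by (intro continuous_on_powr' cF continuous_intros) auto
  have cGq: "continuous_on {a..b} (\<lambda>x. G x powr q)"
    using q G0 by (intro continuous_on_powr' cG continuous_intros) auto
  show "integral {a..b} (\<lambda>x. F x powr p) \<ge> 0" "integral {a..b} (\<lambda>x. G x powr q) \<ge> 0"
    by (auto intro!: integral_nonneg integrable_continuous_real cFp cGq)
  fix l :: real assume l: "l > 0"
  have "integral {a..b} (\<lambda>x. F x * G x)
        \<le> integral {a..b} (\<lambda>x. l powr p / p * F x powr p + l powr (- q) / q * G x powr q)"
  proof (rule integral_le)
    fix x assume x: "x \<in> {a..b}"
    have "(l * F x) * (G x / l) \<le> (l * F x) powr p / p + (G x / l) powr q / q"
      by (rule Youngs_inequality) (use p q pq l F0 G0 x in auto)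
    then show "F x * G x \<le> l powr p / p * F x powr p + l powr (- q) / q * G x powr q"
      using l F0[OF x] G0[OF x] p q by (simp add: powr_mult powr_divide powr_minus field_simps)
  qed (use p q in \<open>auto intro!: integrable_continuous_real continuous_intros cF cG cFp cGq\<close>)
  also have "\<dots> = l powr p * integral {a..b} (\<lambda>x. F x powr p) / p
      + l powr (- q) * integral {a..b} (\<lambda>x. G x powr q) / q"
    by (subst integral_add) (use p q in \<open>auto intro!: integrable_continuous_real continuous_intros cFp cGq\<close>)
  finally show "integral {a..b} (\<lambda>x. F x * G x) \<le> \<dots>" .
qed

lemma AM_GM_eliminate_scale:
  fixes d C M W :: real
  assumes d: "d > 2" and C: "C > 0" and M: "M > 0" and W: "W \<ge> 0"
  shows "(d - 2) / 2 * C * M powr 2 + ((d - 2) / 2)\<^sup>2 * W * M powr (- (4 / (d - 2)))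
         \<ge> d * (d - 2) / 4 * C powr (2 / d) * W powr ((d - 2) / d)"
proof (cases "W = 0")
  case False
  then have W0: "W > 0" using W by simp
  define K where "K = d * (d - 2) / 4"
  define X where "X = K * C * M powr 2"
  define Y where "Y = K * W * M powr (- (4 / (d - 2)))"
  have K0: "K > 0" unfolding K_def using d by simp
  have young: "X powr (2 / d) * Y powr ((d - 2) / d) \<le> 2 / d * X + (d - 2) / d * Y"
    by (rule Youngs_inequality_0) (use K0 C M W0 d in \<open>auto simp: X_def Y_def field_simps\<close>)
  have sum: "2 / d * X + (d - 2) / d * Y
      = (d - 2) / 2 * C * M powr 2 + ((d - 2) / 2)\<^sup>2 * W * M powr (- (4 / (d - 2)))"
    unfolding X_def Y_def K_def using d by (simp add: field_simps power2_eq_square)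
  have Xp: "X powr (2 / d) = K powr (2 / d) * C powr (2 / d) * M powr (2 * (2 / d))"
    unfolding X_def using K0 C M by (simp add: powr_mult powr_powr del: powr_numeral)
  have Yp: "Y powr ((d - 2) / d)
      = K powr ((d - 2) / d) * W powr ((d - 2) / d) * M powr (- (4 / (d - 2)) * ((d - 2) / d))"
    unfolding Y_def using K0 W0 M by (simp add: powr_mult powr_powr)
  have KK: "K powr (2 / d) * K powr ((d - 2) / d) = K"
    using K0 d by (simp add: add_divide_distrib[symmetric] flip: powr_add)
  have MM: "M powr (2 * (2 / d)) * M powr (- (4 / (d - 2)) * ((d - 2) / d)) = 1"
  proof -
    have "2 * (2 / d) + - (4 / (d - 2)) * ((d - 2) / d) = 0"
      using d by (simp add: field_simps)
    then show ?thesis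
      unfolding powr_add[symmetric] using M by simp
  qed
  have "X powr (2 / d) * Y powr ((d - 2) / d)
      = (K powr (2 / d) * K powr ((d - 2) / d)) * C powr (2 / d) * W powr ((d - 2) / d)
        * (M powr (2 * (2 / d)) * M powr (- (4 / (d - 2)) * ((d - 2) / d)))"
    unfolding Xp Yp by (simp only: mult_ac)
  also have "\<dots> = K * C powr (2 / d) * W powr ((d - 2) / d)"
    unfolding KK MM by simp
  finally show ?thesis
    using young sum unfolding K_def by linarith
qed (use d C M in simp)

lemma has_integral_bump:
  fixes k M :: real
  assumes k: "k > 0" and M: "M > 0"
  shows "((\<lambda>y. y * sqrt (max 0 (1 - (\<bar>y\<bar> / M) powr k)))
          has_integral M powr 2 * (Beta (2 / k) (3 / 2) / k)) {0..M}"
proof -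
  let ?f = "\<lambda>x::real. x * sqrt (1 - x powr k)"
  have sub: "((\<lambda>x. (1 / M) *\<^sub>R ?f (x / M)) has_integral integral {0 / M..M / M} ?f) {0..M}"
  proof (rule has_integral_substitution[of 0 M "\<lambda>y. y / M" 0 1 ?f "\<lambda>_. 1 / M"])
    show "continuous_on {0..1} ?f"
      using k by (intro continuous_intros continuous_on_powr') auto
    show "((\<lambda>y. y / M) has_field_derivative 1 / M) (at x within {0..M})" for x
      using M by (auto intro!: derivative_eq_intros)
  qed (use M in auto)
  have "((\<lambda>x. M powr 2 * ((1 / M) *\<^sub>R ?f (x / M)))
      has_integral M powr 2 * (Beta (2 / k) (3 / 2) / k)) {0..M}"
    using has_integral_mult_right[OF sub, of "M powr 2"] integral_unique[OF has_integral_Beta_bump[OF k]] M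
    by simp
  then show ?thesis
  proof (rule has_integral_eq[rotated])
    fix x assume x: "x \<in> {0..M}"
    have "(x / M) powr k \<le> 1"
      using x M k by (intro powr_le1) auto
    then show "M powr 2 * ((1 / M) *\<^sub>R ?f (x / M)) = x * sqrt (max 0 (1 - (\<bar>x\<bar> / M) powr k))"
      using x M by (simp add: power2_eq_square field_simps max_def)
  qed
qed

locale radial_profile =
  fixes d :: real and u u' :: "real \<Rightarrow> real" and R :: real
  assumes d_gt_2: "d > 2" and R_pos: "R > 0"
    and u_deriv: "\<And>x. x \<ge> 0 \<Longrightarrow> (u has_real_derivative u' x) (at x within {0..})"
    and continuous_u': "continuous_on {0..} u'"
    and u_vanishes: "\<And>r. r \<ge> R \<Longrightarrow> u r = 0"
    and u_nonneg: "\<And>r. r \<ge> 0 \<Longrightarrow> u r \<ge> 0"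
begin

definition "q = 2 * d / (d - 2)"
definition "v r = u r powr ((d + 2) / (d - 2))"
definition "rho r = r powr (d - 1)"
definition "m r = integral {0..r} (\<lambda>t. v t * rho t)"
definition "m_total = m R"
definition "h r = r powr (1 - d) * m r"
definition "H r = integral {0..r} h"
definition "w r = m_total * R powr (2 - d) / (d - 2) + H R - H r"

definition "N = integral {0..R} (\<lambda>r. u r powr q * rho r)"
definition "Du = integral {0..R} (\<lambda>r. (u' r)\<^sup>2 * rho r)"
definition "J = integral {0..R} (\<lambda>r. v r * w r * rho r)"
definition "Dw X = integral {0..X} (\<lambda>r. (h r)\<^sup>2 * rho r)"

lemma q_pos: "q > 0"
  unfolding q_def using d_gt_2 by simp

lemma continuous_u: "continuous_on {0..} u"
  unfolding continuous_on_eq_continuous_within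
  using u_deriv DERIV_continuous by fastforce

lemma continuous_v: "continuous_on {0..} v"
  unfolding v_def using d_gt_2 u_nonneg
  by (intro continuous_on_powr' continuous_u continuous_on_const) (auto simp: field_simps)

lemma continuous_u_powr_q: "continuous_on {0..} (\<lambda>r. u r powr q)"
  unfolding q_def using d_gt_2 u_nonneg
  by (intro continuous_on_powr' continuous_u continuous_on_const) (auto simp: field_simps)

lemma continuous_rho: "continuous_on {0..} rho"
  unfolding rho_def using d_gt_2
  by (intro continuous_on_powr' continuous_on_id continuous_on_const) auto

lemma continuous_v_rho: "continuous_on {0..X} (\<lambda>t. v t * rho t)"
  by (intro continuous_intros continuous_on_subset[OF continuous_v]
      continuous_on_subset[OF continuous_rho]) auto

lemma integrable_v_rho: "0 \<le> a \<Longrightarrow> (\<lambda>t. v t * rho t) integrable_on {a..b}"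
  by (rule integrable_continuous_real, rule continuous_on_subset[OF continuous_v_rho[of b]]) auto

lemma v_nonneg: "v r \<ge> 0"
  unfolding v_def by simp

lemma v_vanishes: "r \<ge> R \<Longrightarrow> v r = 0"
  unfolding v_def using u_vanishes by simp

lemma rho_nonneg: "rho r \<ge> 0"
  unfolding rho_def by simp

lemma u_mult_v: "0 \<le> r \<Longrightarrow> u r * v r = u r powr q"
proof (cases "u r = 0")
  case False
  assume "0 \<le> r"
  then have "u r * v r = u r powr 1 * u r powr ((d + 2) / (d - 2))"
    unfolding v_def using False u_nonneg by simp
  also have "\<dots> = u r powr q"
    unfolding q_def powr_add[symmetric] using d_gt_2 by (simp add: field_simps)
  finally show ?thesis .
qed (simp add: v_def)

lemma m_deriv:
  "0 \<le> x \<Longrightarrow> x \<le> X \<Longrightarrow> (m has_real_derivative v x * rho x) (at x within {0..X})"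
  unfolding m_def by (rule integral_has_real_derivative[OF continuous_v_rho]) auto

lemma continuous_m: "continuous_on {0..} m"
  unfolding continuous_on_eq_continuous_within
  using m_deriv at_within_Icc_eq_atLeast
  by (metis DERIV_continuous atLeast_iff less_add_one order_refl less_imp_le)

lemma m_0: "m 0 = 0"
  unfolding m_def by simp

lemma m_nonneg: "m r \<ge> 0"
proof (cases "r \<ge> 0")
  case True
  then show ?thesis
    unfolding m_def by (intro integral_nonneg integrable_v_rho) (auto simp: v_nonneg rho_nonneg)
qed (simp add: m_def)

lemma m_mono: "0 \<le> r \<Longrightarrow> r \<le> r' \<Longrightarrow> m r \<le> m r'"
  unfolding m_def
  by (rule integral_subset_le) (auto intro: integrable_v_rho simp: v_nonneg rho_nonneg)

lemma m_eq_total: "r \<ge> R \<Longrightarrow> m r = m_total"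
proof -
  assume r: "r \<ge> R"
  have "integral {0..R} (\<lambda>t. v t * rho t) + integral {R..r} (\<lambda>t. v t * rho t)
        = integral {0..r} (\<lambda>t. v t * rho t)"
    by (rule Henstock_Kurzweil_Integration.integral_combine) (use r R_pos in \<open>auto intro: integrable_v_rho[of 0]\<close>)
  moreover have "integral {R..r} (\<lambda>t. v t * rho t) = integral {R..r} (\<lambda>t. 0)"
    by (rule integral_cong) (simp add: v_vanishes)
  ultimately show ?thesis
    unfolding m_def m_total_def by simp
qed

lemma m_total_nonneg: "m_total \<ge> 0"
  unfolding m_total_def by (rule m_nonneg)

lemma m_le_powr:
  assumes V: "\<And>r. 0 \<le> r \<Longrightarrow> r \<le> R \<Longrightarrow> v r \<le> V" and r: "0 \<le> r" "r \<le> R"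
  shows "m r \<le> V * r powr d"
proof -
  have V0: "0 \<le> V"
    using V[of 0] v_nonneg[of 0] R_pos by simp
  have "m r \<le> integral {0..r} (\<lambda>t. V * r powr (d - 1))"
    unfolding m_def
  proof (rule integral_le[OF integrable_v_rho])
    fix t assume t: "t \<in> {0..r}"
    have "rho t \<le> r powr (d - 1)"
      unfolding rho_def using t d_gt_2 by (intro powr_mono2) auto
    then show "v t * rho t \<le> V * r powr (d - 1)"
      using V t r v_nonneg[of t] V0 by (intro mult_mono) (auto simp: rho_nonneg)
  qed auto
  also have "\<dots> = V * r powr d"
    using r by (cases "r = 0") (auto simp: powr_diff)
  finally show ?thesis .
qed

lemma h_le_linear:
  assumes V: "\<And>r. 0 \<le> r \<Longrightarrow> r \<le> R \<Longrightarrow> v r \<le> V" and r: "0 \<le> r" "r \<le> R"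
  shows "h r \<le> V * r"
proof (cases "r = 0")
  case False
  have "h r \<le> r powr (1 - d) * (V * r powr d)"
    unfolding h_def using m_le_powr[OF V r] by (intro mult_left_mono) auto
  also have "\<dots> = V * r"
    using False r by (simp flip: powr_add)
  finally show ?thesis .
qed (simp add: h_def)

lemma h_nonneg: "h r \<ge> 0"
  unfolding h_def by (simp add: m_nonneg)

lemma h_eq_tail: "r \<ge> R \<Longrightarrow> h r = m_total * r powr (1 - d)"
  unfolding h_def using m_eq_total by simp

lemma h_mult_rho: "0 \<le> r \<Longrightarrow> h r * rho r = m r"
  unfolding h_def rho_def by (cases "r = 0") (auto simp: m_0 powr_add[symmetric])

text \<open>Near the origin, \<open>h r = O(r)\<close> because \<open>m r = O(r\<^sup>d)\<close>.\<close>
lemma continuous_h: "continuous_on {0..} h"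
proof -
  obtain V where V: "\<And>r. 0 \<le> r \<Longrightarrow> r \<le> R \<Longrightarrow> v r \<le> V"
    using continuous_attains_sup[of "{0..R}" v] continuous_on_subset[OF continuous_v, of "{0..R}"]
      R_pos by fastforce
  have "isCont h x" if "x > 0" for x
  proof -
    have "continuous_on {0<..} h"
      unfolding h_def
      by (intro continuous_intros continuous_on_powr' continuous_on_subset[OF continuous_m]) auto
    then show ?thesis using that continuous_on_eq_continuous_at[of "{0<..}" h] by auto
  qed
  moreover have "(h \<longlongrightarrow> 0) (at 0 within {0..})"
  proof (rule tendsto_sandwich[of "\<lambda>_. 0" h _ "\<lambda>r. V * r"])
    have "eventually (\<lambda>r. 0 \<le> h r \<and> h r \<le> V * r) (at 0 within {0..})"
      unfolding eventually_at using R_pos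
      by (intro exI[of _ R]) (auto intro!: h_le_linear[OF V] simp: h_nonneg dist_real_def)
    then show "\<forall>\<^sub>F r in at 0 within {0..}. 0 \<le> h r" "\<forall>\<^sub>F r in at 0 within {0..}. h r \<le> V * r"
      by (auto elim: eventually_mono)
    show "((\<lambda>r. V * r) \<longlongrightarrow> 0) (at 0 within {0..})"
      by (rule tendsto_eq_intros) auto
  qed auto
  ultimately show ?thesis
    unfolding continuous_on_eq_continuous_within
    by (metis atLeast_iff continuous_at_imp_continuous_within continuous_within h_def
        m_0 mult_zero_right order_less_le)
qed

lemma integrable_h: "0 \<le> a \<Longrightarrow> h integrable_on {a..b}"
  by (rule integrable_continuous_real, rule continuous_on_subset[OF continuous_h]) auto

lemma H_deriv: "0 \<le> x \<Longrightarrow> x \<le> X \<Longrightarrow> (H has_real_derivative h x) (at x within {0..X})"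
  unfolding H_def
  by (rule integral_has_real_derivative) (auto intro: continuous_on_subset[OF continuous_h])

lemma H_eq_tail:
  assumes r: "R \<le> r"
  shows "H r = H R + m_total * (R powr (2 - d) - r powr (2 - d)) / (d - 2)"
proof -
  let ?F = "\<lambda>s. - m_total * s powr (2 - d) / (d - 2)"
  have "(h has_integral (?F r - ?F R)) {R..r}"
  proof (rule fundamental_theorem_of_calculus)
    fix s assume s: "s \<in> {R..r}"
    then have "(?F has_real_derivative - m_total * ((2 - d) * s powr (2 - d - 1)) / (d - 2)) (at s)"
      using R_pos d_gt_2 by (auto intro!: derivative_eq_intros)
    moreover have "- m_total * ((2 - d) * s powr (2 - d - 1)) / (d - 2) = h s"
      using h_eq_tail[of s] s d_gt_2 by (auto simp: field_simps)
    ultimately show "(?F has_vector_derivative h s) (at s within {R..r})"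
      by (auto simp: has_real_derivative_iff_has_vector_derivative intro: has_vector_derivative_at_within)
  qed (use r in auto)
  moreover have "integral {0..R} h + integral {R..r} h = integral {0..r} h"
    by (rule Henstock_Kurzweil_Integration.integral_combine) (use r R_pos in \<open>auto intro: integrable_h\<close>)
  ultimately show ?thesis
    unfolding H_def by (auto dest!: integral_unique simp: diff_divide_distrib right_diff_distrib)
qed

lemma w_eq_tail: "R \<le> r \<Longrightarrow> w r = m_total * r powr (2 - d) / (d - 2)"
  unfolding w_def using H_eq_tail d_gt_2 by (simp add: field_simps)

lemma w_deriv: "0 \<le> x \<Longrightarrow> x \<le> X \<Longrightarrow> (w has_real_derivative - h x) (at x within {0..X})"
  unfolding w_def by (auto intro!: derivative_eq_intros H_deriv)

lemma w_deriv_at: "0 < x \<Longrightarrow> (w has_real_derivative - h x) (at x)"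
  using w_deriv[of x "x + 1"] at_within_interior[of x "{0..x + 1}"] by simp

lemma continuous_w: "continuous_on {0..} w"
  unfolding continuous_on_eq_continuous_within
  using w_deriv at_within_Icc_eq_atLeast
  by (metis DERIV_continuous atLeast_iff less_add_one order_refl less_imp_le)

lemma w_nonneg: "0 \<le> r \<Longrightarrow> w r \<ge> 0"
proof (cases "r \<le> R")
  case True
  assume r: "0 \<le> r"
  have "integral {0..r} h + integral {r..R} h = integral {0..R} h"
    by (rule Henstock_Kurzweil_Integration.integral_combine) (use r True in \<open>auto intro: integrable_h\<close>)
  moreover have "integral {r..R} h \<ge> 0"
    by (rule integral_nonneg) (auto intro: integrable_h[OF r] simp: h_nonneg)
  moreover have "m_total * R powr (2 - d) / (d - 2) \<ge> 0"
    using m_total_nonneg d_gt_2 by simp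
  ultimately show ?thesis
    unfolding w_def H_def by linarith
qed (use w_eq_tail m_total_nonneg d_gt_2 in auto)

lemma inner_integral_eq_m:
  assumes s: "s > 0"
  shows "(LINT t:{0<..<s}|lborel. v t * t powr (d - 1)) = m s"
proof -
  have i: "set_integrable lborel {0<..<s} (\<lambda>t. v t * rho t)"
    by (rule set_integrable_subset[OF borel_integrable_atLeastAtMost'[OF continuous_v_rho[of s]]]) auto
  have "(LINT t:{0<..<s}|lborel. v t * t powr (d - 1)) = integral {0<..<s} (\<lambda>t. v t * rho t)"
    using set_borel_integral_eq_integral(2)[OF i] by (simp add: rho_def)
  also have "\<dots> = m s"
    unfolding m_def by (simp flip: integral_open_interval_real)
  finally show ?thesis .
qed

lemma inv_lap_eq: "r > 0 \<Longrightarrow> inv_lap d v r = w r"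
proof -
  assume r: "r > 0"
  define X where "X = max r R + 1"
  have X: "X > r" "X \<ge> R" "X > 0"
    unfolding X_def using R_pos by auto
  have hX: "\<And>s. s \<in> {X<..} \<Longrightarrow> h s = m_total * s powr (1 - d)"
    using h_eq_tail X by auto
  have tail: "set_integrable lborel {X<..} (\<lambda>s. s powr (1 - d))"
    "(LINT s:{X<..}|lborel. s powr (1 - d)) = X powr (2 - d) / (d - 2)"
    using set_integral_powr_Ioi[of "1 - d" X] d_gt_2 X by (auto simp: field_simps)
  have i1: "set_integrable lborel {r<..X} h"
    by (rule set_integrable_subset[OF borel_integrable_atLeastAtMost'])
       (use r in \<open>auto intro: continuous_on_subset[OF continuous_h]\<close>)
  have i2: "set_integrable lborel {X<..} h"
    using set_integrable_cong[of lborel lborel "{X<..}" "{X<..}" h "\<lambda>s. m_total * s powr (1 - d)"]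
      hX tail(1) by auto
  have U: "{r<..} = {r<..X} \<union> {X<..}"
    using X by auto
  have "inv_lap d v r = (LINT s:{r<..}|lborel. h s)"
    unfolding inv_lap_def h_def
    by (rule set_lebesgue_integral_cong) (use r in \<open>auto simp: inner_integral_eq_m\<close>)
  also have "\<dots> = (LINT s:{r<..X}|lborel. h s) + (LINT s:{X<..}|lborel. h s)"
    unfolding U by (rule set_integral_Un[OF _ i1 i2]) auto
  also have "(LINT s:{r<..X}|lborel. h s) = H X - H r"
    using set_borel_integral_eq_integral(2)[OF i1] integral_Ioc_eq_Icc
      Henstock_Kurzweil_Integration.integral_combine[of 0 r X h] integrable_h[of 0 X] r X
    unfolding H_def by auto
  also have "(LINT s:{X<..}|lborel. h s) = (LINT s:{X<..}|lborel. m_total * s powr (1 - d))"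
    by (rule set_lebesgue_integral_cong) (auto simp: hX)
  also have "\<dots> = m_total * X powr (2 - d) / (d - 2)"
    by (simp add: tail(2))
  also have "H X - H r + m_total * X powr (2 - d) / (d - 2) = w r"
    unfolding w_def using H_eq_tail[of X] X d_gt_2 by (simp add: field_simps)
  finally show ?thesis .
qed

lemma continuous_w_powr_q: "continuous_on {0..} (\<lambda>r. w r powr q)"
  using q_pos w_nonneg by (intro continuous_on_powr' continuous_w continuous_on_const) auto

lemma continuous_on_Icc_intros:
  "continuous_on {0..X} u'" "continuous_on {0..X} u" "continuous_on {0..X} v"
  "continuous_on {0..X} (\<lambda>r. u r powr q)" "continuous_on {0..X} rho" "continuous_on {0..X} m"
  "continuous_on {0..X} h" "continuous_on {0..X} w" "continuous_on {0..X} (\<lambda>r. w r powr q)"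
  by (auto intro: continuous_on_subset continuous_u' continuous_u continuous_v continuous_u_powr_q
      continuous_rho continuous_m continuous_h continuous_w continuous_w_powr_q)

lemma J_eq_Dw:
  assumes X: "X \<ge> R"
  shows "J = m_total * w X + Dw X"
proof -
  have X0: "X \<ge> 0" using X R_pos by auto
  have FTC: "((\<lambda>x. v x * rho x * w x + m x * (- h x)) has_integral (m X * w X - m 0 * w 0)) {0..X}"
  proof (rule fundamental_theorem_of_calculus[OF X0])
    fix x assume "x \<in> {0..X}"
    then have "((\<lambda>r. m r * w r) has_real_derivative (v x * rho x * w x + m x * (- h x)))
        (at x within {0..X})"
      using m_deriv[of x X] w_deriv[of x X] by (auto intro!: derivative_eq_intros)
    then show "((\<lambda>r. m r * w r) has_vector_derivative (v x * rho x * w x + m x * (- h x)))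
        (at x within {0..X})"
      by (simp add: has_real_derivative_iff_has_vector_derivative)
  qed
  have "integral {0..X} (\<lambda>x. v x * w x * rho x) = J"
  proof -
    have "integral {0..R} (\<lambda>x. v x * w x * rho x) + integral {R..X} (\<lambda>x. v x * w x * rho x)
          = integral {0..X} (\<lambda>x. v x * w x * rho x)"
      by (rule Henstock_Kurzweil_Integration.integral_combine)
         (use X R_pos in \<open>auto intro!: integrable_continuous_real continuous_intros
           continuous_on_Icc_intros\<close>)
    moreover have "integral {R..X} (\<lambda>x. v x * w x * rho x) = integral {R..X} (\<lambda>x. 0)"
      by (rule integral_cong) (simp add: v_vanishes)
    ultimately show ?thesis
      unfolding J_def by simp
  qed
  then have "((\<lambda>x. v x * w x * rho x) has_integral J) {0..X}"
    using continuous_on_has_integral[of 0 X "\<lambda>x. v x * w x * rho x"]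
    by (simp add: continuous_intros continuous_on_Icc_intros)
  moreover have "((\<lambda>x. (h x)\<^sup>2 * rho x) has_integral Dw X) {0..X}"
    unfolding Dw_def by (intro continuous_on_has_integral continuous_intros continuous_on_Icc_intros)
  ultimately have "((\<lambda>x. v x * w x * rho x - (h x)\<^sup>2 * rho x) has_integral (J - Dw X)) {0..X}"
    by (rule has_integral_diff)
  then have "((\<lambda>x. v x * rho x * w x + m x * (- h x)) has_integral (J - Dw X)) {0..X}"
    by (rule has_integral_eq[rotated]) (auto simp: h_mult_rho[symmetric] power2_eq_square algebra_simps)
  then have "J - Dw X = m X * w X - m 0 * w 0"
    using FTC by (rule has_integral_unique)
  then show ?thesis
    using m_0 m_eq_total[OF X] by simp
qed

lemma integral_u'_mult_m: "integral {0..R} (\<lambda>r. u' r * m r) = - N"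
proof -
  have R0: "0 \<le> R" using R_pos by simp
  have FTC: "((\<lambda>x. u' x * m x + u x * (v x * rho x)) has_integral (u R * m R - u 0 * m 0)) {0..R}"
  proof (rule fundamental_theorem_of_calculus[OF R0])
    fix x assume x: "x \<in> {0..R}"
    have "(u has_real_derivative u' x) (at x within {0..R})"
      using u_deriv[of x] x by (auto intro: DERIV_subset)
    then have "((\<lambda>r. u r * m r) has_real_derivative (u' x * m x + u x * (v x * rho x)))
        (at x within {0..R})"
      using m_deriv[of x R] x by (auto intro!: derivative_eq_intros)
    then show "((\<lambda>r. u r * m r) has_vector_derivative (u' x * m x + u x * (v x * rho x)))
        (at x within {0..R})"
      by (simp add: has_real_derivative_iff_has_vector_derivative)
  qed
  have "((\<lambda>x. u' x * m x + u x powr q * rho x)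
      has_integral (integral {0..R} (\<lambda>r. u' r * m r) + N)) {0..R}"
    unfolding N_def
    by (intro has_integral_add continuous_on_has_integral continuous_intros continuous_on_Icc_intros)
  then have "((\<lambda>x. u' x * m x + u x * (v x * rho x))
      has_integral (integral {0..R} (\<lambda>r. u' r * m r) + N)) {0..R}"
    by (rule has_integral_eq[rotated]) (simp add: u_mult_v mult.assoc[symmetric])
  then have "integral {0..R} (\<lambda>r. u' r * m r) + N = u R * m R - u 0 * m 0"
    using FTC by (rule has_integral_unique)
  then show ?thesis
    using m_0 u_vanishes[of R] by simp
qed

lemma J_ge_Dw: "J \<ge> Dw R"
  using J_eq_Dw[of R] m_total_nonneg w_nonneg[of R] R_pos by simp

lemma quadratic_in_Du_nonneg: "0 \<le> \<alpha>\<^sup>2 * Du - 2 * \<alpha> * N + J"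
proof -
  have "((\<lambda>x. \<alpha>\<^sup>2 * ((u' x)\<^sup>2 * rho x) + (2 * \<alpha>) * (u' x * m x) + (h x)\<^sup>2 * rho x)
      has_integral (\<alpha>\<^sup>2 * Du + (2 * \<alpha>) * (- N) + Dw R)) {0..R}"
    unfolding Du_def Dw_def integral_u'_mult_m[symmetric]
    by (intro has_integral_add has_integral_mult_right continuous_on_has_integral continuous_intros
        continuous_on_Icc_intros)
  moreover have "\<alpha>\<^sup>2 * ((u' x)\<^sup>2 * rho x) + (2 * \<alpha>) * (u' x * m x) + (h x)\<^sup>2 * rho x
      = (\<alpha> * u' x + h x)\<^sup>2 * rho x" if "x \<in> {0..R}" for x
    using h_mult_rho[of x] that by (auto simp: power2_eq_square algebra_simps)
  ultimately have "((\<lambda>x. (\<alpha> * u' x + h x)\<^sup>2 * rho x)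
      has_integral (\<alpha>\<^sup>2 * Du + (2 * \<alpha>) * (- N) + Dw R)) {0..R}"
    by (rule has_integral_eq[rotated])
  then have "0 \<le> \<alpha>\<^sup>2 * Du + (2 * \<alpha>) * (- N) + Dw R"
    by (rule has_integral_nonneg) (simp add: rho_nonneg)
  then show ?thesis
    using J_ge_Dw by simp
qed

lemma N_nonneg: "N \<ge> 0"
  unfolding N_def using R_pos
  by (intro integral_nonneg integrable_continuous_real continuous_intros continuous_on_Icc_intros)
     (auto simp: rho_nonneg)

lemma second_inequality:
  "sd d * N powr (1 + 2 / d) - J \<le> sd d * N powr (4 / d) * (sd d * Du - N powr ((d - 2) / d))"
proof -
  define \<alpha> where "\<alpha> = sd d * N powr (2 / d)"
  have "\<alpha>\<^sup>2 = (sd d)\<^sup>2 * N powr (4 / d)"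
    unfolding \<alpha>_def by (simp add: power_mult_distrib power2_eq_square flip: powr_add)
  moreover have "\<alpha> * N = sd d * N powr (1 + 2 / d)"
    unfolding \<alpha>_def using N_nonneg by (cases "N = 0") (auto simp: powr_add)
  moreover have "N powr (4 / d) * N powr ((d - 2) / d) = N powr (1 + 2 / d)"
    using d_gt_2 by (simp add: field_simps flip: powr_add)
  ultimately show ?thesis
    using quadratic_in_Du_nonneg[of \<alpha>] by (simp add: power2_eq_square algebra_simps)
qed

definition "\<gamma> = (d - 2) / 2"
definition "\<kappa> = 4 / (d - 2)"
definition "f r = r powr \<gamma> * w r"
definition "f' x = \<gamma> * x powr (\<gamma> - 1) * w x - x powr \<gamma> * h x"
text \<open>Truncating \<open>W\<close> at \<open>R\<close> loses nothing for Hoelder's inequality, as \<open>v\<close> vanishes beyond \<open>R\<close>.\<close>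
definition "W = integral {0..R} (\<lambda>r. w r powr q * rho r)"
definition "Cb = sqrt pi * Gamma (d / 2) / Gamma ((d + 1) / 2)"

lemma \<gamma>_pos: "\<gamma> > 0"
  unfolding \<gamma>_def using d_gt_2 by simp

lemma \<kappa>_pos: "\<kappa> > 0"
  unfolding \<kappa>_def using d_gt_2 by simp

lemma q_eq_\<kappa>_plus_2: "q = \<kappa> + 2"
  unfolding q_def \<kappa>_def using d_gt_2 by (simp add: field_simps)

lemma Cb_pos: "Cb > 0"
  unfolding Cb_def using d_gt_2 by simp

lemma continuous_f: "continuous_on {0..} f"
  unfolding f_def using \<gamma>_pos
  by (intro continuous_intros continuous_on_powr' continuous_w) auto

lemma f_nonneg: "0 \<le> r \<Longrightarrow> f r \<ge> 0"
  unfolding f_def by (simp add: w_nonneg)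

lemma f_0: "f 0 = 0"
  unfolding f_def using \<gamma>_pos by simp

lemma f_deriv: "0 < x \<Longrightarrow> (f has_real_derivative f' x) (at x)"
  unfolding f_def f'_def using w_deriv_at[of x] by (auto intro!: derivative_eq_intros)

lemma f_eq_tail: "R \<le> r \<Longrightarrow> f r = m_total / (d - 2) * r powr (- \<gamma>)"
proof -
  assume r: "R \<le> r"
  then have "f r = m_total / (d - 2) * r powr (\<gamma> + (2 - d))"
    unfolding f_def w_eq_tail[OF r] by (simp add: powr_add)
  also have "\<gamma> + (2 - d) = - \<gamma>"
    unfolding \<gamma>_def by argo
  finally show ?thesis .
qed

lemma f_tendsto_0: "(f \<longlongrightarrow> 0) at_top"
proof -
  have "((\<lambda>r. m_total / (d - 2) * r powr (- \<gamma>)) \<longlongrightarrow> m_total / (d - 2) * 0) at_top"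
    by (intro tendsto_intros tendsto_neg_powr) (use \<gamma>_pos in \<open>auto intro: filterlim_ident\<close>)
  moreover have "\<forall>\<^sub>F r in at_top. m_total / (d - 2) * r powr (- \<gamma>) = f r"
    using eventually_ge_at_top[of R] by eventually_elim (simp add: f_eq_tail)
  ultimately show ?thesis
    by (simp add: Lim_transform_eventually)
qed

text \<open>The pointwise calibration inequality: the difference of the two sides is
  \<open>(x f' x - \<sigma> \<phi>)\<^sup>2 / x\<close>.\<close>
lemma calibration_pointwise:
  fixes \<sigma> b \<phi> :: real
  assumes x: "0 < x" and \<sigma>: "\<sigma>\<^sup>2 = 1"
    and \<phi>_sq: "\<phi>\<^sup>2 = \<gamma>\<^sup>2 * (f x)\<^sup>2 - b * f x powr q"
  shows "(h x)\<^sup>2 * rho x - b * (w x powr q * rho x) \<ge> (\<sigma> * 2 * \<phi> - 2 * \<gamma> * f x) * f' x"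
proof -
  define t where "t = x powr \<gamma>"
  define G where "G = x * f' x"
  have e_rho: "rho x = t\<^sup>2 * x"
  proof -
    have "d - 1 = \<gamma> + \<gamma> + 1"
      unfolding \<gamma>_def by argo
    then have "rho x = x powr \<gamma> * x powr \<gamma> * x powr 1"
      unfolding rho_def by (simp only: powr_add)
    then show ?thesis
      unfolding t_def using x by (simp add: power2_eq_square)
  qed
  have e_fq: "f x powr q = t\<^sup>2 * x\<^sup>2 * w x powr q"
  proof -
    have "\<gamma> * q = \<gamma> + \<gamma> + 2"
      unfolding \<gamma>_def q_def using d_gt_2 by (simp add: field_simps)
    then have "t powr q = x powr \<gamma> * x powr \<gamma> * x powr 2"
      unfolding t_def by (simp only: powr_powr powr_add)
    then have "t powr q = t\<^sup>2 * x\<^sup>2"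
      unfolding t_def[symmetric] using x by (simp add: power2_eq_square)
    then show ?thesis
      unfolding f_def t_def[symmetric] by (simp add: powr_mult w_nonneg t_def)
  qed
  have e_f: "f x = t * w x"
    unfolding f_def t_def ..
  have e_G: "G = \<gamma> * t * w x - x * t * h x"
    unfolding G_def f'_def t_def using x by (simp add: powr_diff field_simps)
  have "(h x)\<^sup>2 * rho x - b * (w x powr q * rho x) - (\<sigma> * 2 * \<phi> - 2 * \<gamma> * f x) * f' x
      = (G - \<sigma> * \<phi>)\<^sup>2 / x"
  proof -
    have sq: "(G - \<sigma> * \<phi>)\<^sup>2 = G\<^sup>2 - 2 * \<sigma> * G * \<phi> + \<phi>\<^sup>2"
      using \<sigma> by (simp add: power2_eq_square algebra_simps)
    have f'_eq: "f' x = G / x"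
      unfolding G_def using x by simp
    show ?thesis
      unfolding sq unfolding \<phi>_sq unfolding e_fq unfolding f'_eq e_rho e_f unfolding e_G
      using x by (simp add: field_simps power2_eq_square)
  qed
  moreover have "(G - \<sigma> * \<phi>)\<^sup>2 / x \<ge> 0"
    using x by simp
  ultimately show ?thesis
    by linarith
qed

end

locale radial_maximum = radial_profile +
  fixes r0 :: real
  assumes r0_nonneg: "r0 \<ge> 0"
    and f_le_max: "\<And>r. 0 \<le> r \<Longrightarrow> f r \<le> f r0"
    and max_pos: "f r0 > 0"
begin

definition "M = f r0"
definition "b = \<gamma>\<^sup>2 * M powr (- \<kappa>)"
definition "\<phi> y = \<gamma> * y * sqrt (max 0 (1 - (\<bar>y\<bar> / M) powr \<kappa>))"
text \<open>The lower limit \<open>-1\<close> makes \<open>\<Phi>\<close> differentiable at \<open>0\<close> from both sides.\<close>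
definition "\<Phi> y = integral {-1..y} \<phi>"
definition "L x = (h x)\<^sup>2 * rho x - b * (w x powr q * rho x)"

lemma M_pos: "M > 0"
  unfolding M_def by (rule max_pos)

lemma f_in_range: "0 \<le> x \<Longrightarrow> f x \<in> {0..M}"
  unfolding M_def using f_nonneg f_le_max by auto

lemma continuous_\<phi>: "continuous_on A \<phi>"
proof -
  have "continuous_on A (\<lambda>y. (\<bar>y\<bar> / M) powr \<kappa>)"
    using \<kappa>_pos M_pos by (intro continuous_on_powr' continuous_intros) auto
  then have "continuous_on A (\<lambda>y. sqrt (max 0 (1 - (\<bar>y\<bar> / M) powr \<kappa>)))"
    by (intro continuous_on_real_sqrt continuous_on_max continuous_on_const continuous_on_diff)
  then show ?thesis
    unfolding \<phi>_def by (intro continuous_on_mult continuous_on_const continuous_on_id)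
qed

lemma \<phi>_sq: "0 \<le> y \<Longrightarrow> y \<le> M \<Longrightarrow> (\<phi> y)\<^sup>2 = \<gamma>\<^sup>2 * y\<^sup>2 - b * y powr q"
proof -
  assume y: "0 \<le> y" "y \<le> M"
  then have "(y / M) powr \<kappa> \<le> 1"
    using M_pos \<kappa>_pos by (intro powr_le1) auto
  moreover have "(y / M) powr \<kappa> = y powr \<kappa> / M powr \<kappa>"
    using y M_pos by (simp add: powr_divide)
  then have "(y / M) powr \<kappa> = y powr \<kappa> * M powr (- \<kappa>)"
    by (simp add: powr_minus divide_inverse)
  ultimately have "(\<phi> y)\<^sup>2 = \<gamma>\<^sup>2 * y\<^sup>2 * (1 - y powr \<kappa> * M powr (- \<kappa>))"
    unfolding \<phi>_def using y by (simp add: power_mult_distrib max_def)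
  moreover have "y powr q = y powr \<kappa> * y\<^sup>2"
    using y q_pos \<kappa>_pos by (cases "y = 0") (auto simp: q_eq_\<kappa>_plus_2 powr_add)
  ultimately show ?thesis
    unfolding b_def by (simp add: algebra_simps)
qed

lemma \<phi>_le: "0 \<le> y \<Longrightarrow> \<phi> y \<le> \<gamma> * y"
proof -
  assume "0 \<le> y"
  moreover have "sqrt (max 0 (1 - (\<bar>y\<bar> / M) powr \<kappa>)) \<le> 1"
    by (simp add: max_def)
  ultimately show ?thesis
    unfolding \<phi>_def using \<gamma>_pos mult_left_mono[of _ 1 "\<gamma> * y"] by simp
qed

lemma \<Phi>_deriv: "0 \<le> y \<Longrightarrow> y \<le> M \<Longrightarrow> (\<Phi> has_real_derivative \<phi> y) (at y)"
proof -
  assume y: "0 \<le> y" "y \<le> M"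
  have "(\<Phi> has_real_derivative \<phi> y) (at y within {-1..M + 1})"
    unfolding \<Phi>_def by (rule integral_has_real_derivative[OF continuous_\<phi>]) (use y in auto)
  moreover have "at y within {-1..M + 1} = at y"
    by (rule at_within_interior) (use y in auto)
  ultimately show ?thesis
    by simp
qed

lemma continuous_\<Phi>: "continuous_on {0..M} \<Phi>"
  unfolding continuous_on_eq_continuous_within
  using \<Phi>_deriv by (metis DERIV_isCont atLeastAtMost_iff continuous_at_imp_continuous_within)

lemma \<Phi>_diff: "0 \<le> y \<Longrightarrow> \<Phi> y - \<Phi> 0 = integral {0..y} \<phi>"
proof -
  assume y: "0 \<le> y"
  have "integral {-1..0} \<phi> + integral {0..y} \<phi> = integral {-1..y} \<phi>"
    by (rule Henstock_Kurzweil_Integration.integral_combine)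
       (use y in \<open>auto intro: integrable_continuous_real continuous_\<phi>\<close>)
  then show ?thesis
    unfolding \<Phi>_def by simp
qed

lemma \<Phi>_diff_le: "0 \<le> y \<Longrightarrow> \<Phi> y - \<Phi> 0 \<le> \<gamma> * y\<^sup>2"
proof -
  assume y: "0 \<le> y"
  have "integral {0..y} \<phi> \<le> integral {0..y} (\<lambda>_. \<gamma> * y)"
  proof (rule integral_le)
    fix x assume "x \<in> {0..y}"
    then have "\<phi> x \<le> \<gamma> * x" "\<gamma> * x \<le> \<gamma> * y"
      using \<phi>_le \<gamma>_pos by (auto intro: mult_left_mono)
    then show "\<phi> x \<le> \<gamma> * y"
      by linarith
  qed (auto intro: integrable_continuous_real continuous_\<phi>)
  then show ?thesis
    using \<Phi>_diff[OF y] y by (simp add: power2_eq_square mult_ac)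
qed

lemma \<Phi>_diff_M: "\<Phi> M - \<Phi> 0 = \<gamma> * Cb * M powr 2 / 4"
proof -
  have e: "2 / \<kappa> = (d - 2) / 2"
    unfolding \<kappa>_def using d_gt_2 by (simp add: field_simps)
  have "Beta (2 / \<kappa>) (3 / 2) / \<kappa> = Beta ((d - 2) / 2) (3 / 2) * (d - 2) / 4"
    unfolding e unfolding \<kappa>_def using d_gt_2 by simp
  also have "\<dots> = Cb / 4"
    unfolding Cb_def using Beta_half_shift_three_halves[OF d_gt_2] by simp
  finally have Beta_eq: "Beta (2 / \<kappa>) (3 / 2) / \<kappa> = Cb / 4" .
  have "((\<lambda>y. \<gamma> * (y * sqrt (max 0 (1 - (\<bar>y\<bar> / M) powr \<kappa>))))
      has_integral \<gamma> * (M powr 2 * (Beta (2 / \<kappa>) (3 / 2) / \<kappa>))) {0..M}"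
    by (rule has_integral_mult_right[OF has_integral_bump[OF \<kappa>_pos M_pos]])
  then have "((\<lambda>y. \<gamma> * (y * sqrt (max 0 (1 - (\<bar>y\<bar> / M) powr \<kappa>))))
      has_integral \<gamma> * (M powr 2 * (Cb / 4))) {0..M}"
    unfolding Beta_eq .
  then have "(\<phi> has_integral \<gamma> * (M powr 2 * (Cb / 4))) {0..M}"
    unfolding \<phi>_def by (simp only: mult.assoc)
  then show ?thesis
    using \<Phi>_diff[of M] M_pos by (simp add: integral_unique mult_ac)
qed

lemma continuous_L: "continuous_on {0..X} L"
  unfolding L_def
  by (intro continuous_on_diff continuous_on_mult continuous_on_power continuous_on_const
      continuous_on_Icc_intros)

lemma integral_L_ge:
  assumes st: "0 \<le> s" "s \<le> t" and \<sigma>: "\<sigma>\<^sup>2 = 1"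
  shows "integral {s..t} L \<ge> (2 * \<sigma> * \<Phi> (f t) - \<gamma> * (f t)\<^sup>2) - (2 * \<sigma> * \<Phi> (f s) - \<gamma> * (f s)\<^sup>2)"
proof -
  let ?\<psi> = "\<lambda>x. 2 * \<sigma> * \<Phi> (f x) - \<gamma> * (f x)\<^sup>2"
  let ?\<psi>' = "\<lambda>x. (\<sigma> * 2 * \<phi> (f x) - 2 * \<gamma> * f x) * f' x"
  have "(?\<psi>' has_integral (?\<psi> t - ?\<psi> s)) {s..t}"
  proof (rule fundamental_theorem_of_calculus_interior[OF st(2)])
    have cf: "continuous_on {s..t} f"
      by (rule continuous_on_subset[OF continuous_f]) (use st in auto)
    have "f ` {s..t} \<subseteq> {0..M}"
      by (intro image_subsetI f_in_range) (use st in auto)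
    then have "continuous_on {s..t} (\<lambda>x. \<Phi> (f x))"
      by (rule continuous_on_compose2[OF continuous_\<Phi> cf])
    then show "continuous_on {s..t} ?\<psi>"
      by (rule continuous_on_diff[OF continuous_on_mult[OF continuous_on_const]
          continuous_on_mult[OF continuous_on_const continuous_on_power[OF cf]]])
    fix x assume x: "x \<in> {s<..<t}"
    then have x0: "0 < x" using st by auto
    have "((\<lambda>x. \<Phi> (f x)) has_real_derivative \<phi> (f x) * f' x) (at x)"
      using \<Phi>_deriv f_in_range[of x] x0 by (intro DERIV_chain2[OF _ f_deriv[OF x0]]) auto
    moreover have "((\<lambda>x. (f x)\<^sup>2) has_real_derivative 2 * f x * f' x) (at x)"
      using DERIV_power[OF f_deriv[OF x0], of 2] by (simp add: mult_ac)
    ultimately have "(?\<psi> has_real_derivative 2 * \<sigma> * (\<phi> (f x) * f' x) - \<gamma> * (2 * f x * f' x)) (at x)"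
      by (intro DERIV_diff DERIV_cmult)
    then have "(?\<psi> has_real_derivative ?\<psi>' x) (at x)"
      by (simp add: algebra_simps)
    then show "(?\<psi> has_vector_derivative ?\<psi>' x) (at x)"
      by (simp add: has_real_derivative_iff_has_vector_derivative)
  qed
  then have "(?\<psi>' has_integral (?\<psi> t - ?\<psi> s)) {s<..<t}"
    by (simp only: has_integral_Icc_iff_Ioo)
  moreover have "(L has_integral integral {s..t} L) {s<..<t}"
    unfolding has_integral_Icc_iff_Ioo[symmetric]
    by (rule continuous_on_has_integral[OF continuous_on_subset[OF continuous_L[of t]]]) (use st in auto)
  moreover have "?\<psi>' x \<le> L x" if "x \<in> {s<..<t}" for x
  proof -
    have "0 < x" using that st by auto
    then show ?thesis
      unfolding L_def
      by (rule calibration_pointwise[OF _ \<sigma> \<phi>_sq]) (use f_in_range[of x] \<open>0 < x\<close> in auto)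
  qed
  ultimately show ?thesis
    by (rule has_integral_le)
qed

lemma J_ge_calibration_truncated:
  assumes X: "X \<ge> R" "X \<ge> r0"
  shows "J \<ge> \<gamma> * Cb * M powr 2 + b * W - 3 * \<gamma> * (f X)\<^sup>2"
proof -
  have X0: "X \<ge> 0" using X R_pos by simp
  define WX where "WX = integral {0..X} (\<lambda>x. w x powr q * rho x)"
  have cWX: "continuous_on {0..X} (\<lambda>x. w x powr q * rho x)"
    by (intro continuous_on_mult continuous_on_Icc_intros)
  have "integral {0..r0} L + integral {r0..X} L = integral {0..X} L"
    by (rule Henstock_Kurzweil_Integration.integral_combine)
       (use r0_nonneg X in \<open>auto intro: integrable_continuous_real continuous_L\<close>)
  moreover have "integral {0..X} L = Dw X - b * WX"
    unfolding L_def Dw_def WX_def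
    by (intro integral_unique has_integral_diff has_integral_mult_right continuous_on_has_integral cWX
        continuous_on_mult continuous_on_power continuous_on_Icc_intros)
  moreover have "integral {0..r0} L \<ge> 2 * (\<Phi> M - \<Phi> 0) - \<gamma> * M\<^sup>2"
    using integral_L_ge[of 0 r0 1] r0_nonneg f_0 unfolding M_def by simp
  moreover have "integral {r0..X} L \<ge> 2 * (\<Phi> M - \<Phi> (f X)) + \<gamma> * M\<^sup>2 - \<gamma> * (f X)\<^sup>2"
    using integral_L_ge[of r0 X "-1"] X r0_nonneg unfolding M_def by simp
  ultimately have "Dw X - b * WX \<ge> 4 * (\<Phi> M - \<Phi> 0) - 2 * (\<Phi> (f X) - \<Phi> 0) - \<gamma> * (f X)\<^sup>2"
    by argo
  moreover have "\<Phi> (f X) - \<Phi> 0 \<le> \<gamma> * (f X)\<^sup>2"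
    using \<Phi>_diff_le f_nonneg X0 by simp
  moreover have "J \<ge> Dw X"
    using J_eq_Dw[OF X(1)] m_total_nonneg w_nonneg[OF X0] by simp
  moreover have "WX \<ge> W"
  proof -
    have "integral {0..R} (\<lambda>x. w x powr q * rho x) + integral {R..X} (\<lambda>x. w x powr q * rho x) = WX"
      unfolding WX_def
      by (rule Henstock_Kurzweil_Integration.integral_combine)
         (use X R_pos cWX in \<open>auto intro: integrable_continuous_real\<close>)
    moreover have "integral {R..X} (\<lambda>x. w x powr q * rho x) \<ge> 0"
      by (rule integral_nonneg)
         (use R_pos in \<open>auto intro!: integrable_continuous_real continuous_on_subset[OF cWX]
           simp: rho_nonneg\<close>)
    ultimately show ?thesis
      unfolding W_def by simp
  qed
  then have "b * WX \<ge> b * W"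
    unfolding b_def by (intro mult_left_mono) auto
  ultimately show ?thesis
    using \<Phi>_diff_M by argo
qed

lemma J_ge_calibration: "J \<ge> \<gamma> * Cb * M powr 2 + \<gamma>\<^sup>2 * W * M powr (- \<kappa>)"
proof -
  have "((\<lambda>X. J + 3 * \<gamma> * (f X)\<^sup>2) \<longlongrightarrow> J + 3 * \<gamma> * 0\<^sup>2) at_top"
    by (intro tendsto_intros f_tendsto_0)
  moreover have "\<forall>\<^sub>F X in at_top. \<gamma> * Cb * M powr 2 + b * W \<le> J + 3 * \<gamma> * (f X)\<^sup>2"
    using eventually_ge_at_top[of "max R r0"]
  proof eventually_elim
    case (elim X)
    then show ?case
      using J_ge_calibration_truncated[of X] by simp
  qed
  ultimately have "\<gamma> * Cb * M powr 2 + b * W \<le> J"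
    by (auto intro: tendsto_lowerbound)
  then show ?thesis
    unfolding b_def by (simp add: algebra_simps)
qed

end

context radial_profile
begin

lemma W_nonneg: "W \<ge> 0"
  unfolding W_def using R_pos
  by (intro integral_nonneg integrable_continuous_real continuous_on_mult continuous_on_Icc_intros)
     (auto simp: rho_nonneg)

lemma f_attains_max:
  assumes "m_total > 0"
  obtains r0 where "radial_maximum d u u' R r0"
proof -
  obtain r0 where r0: "r0 \<in> {0..R}" and max: "\<And>y. y \<in> {0..R} \<Longrightarrow> f y \<le> f r0"
    using continuous_attains_sup[of "{0..R}" f] continuous_on_subset[OF continuous_f] R_pos by force
  have "f R > 0"
    using f_eq_tail[of R] assms d_gt_2 R_pos by simp
  have tail_le: "f r \<le> f R" if "r \<ge> R" for r
  proof -
    have "r powr (- \<gamma>) \<le> R powr (- \<gamma>)"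
      using that R_pos \<gamma>_pos by (intro powr_mono2') auto
    then show ?thesis
      using f_eq_tail[of r] f_eq_tail[of R] that assms d_gt_2
      by (auto intro!: mult_left_mono divide_right_mono)
  qed
  have "f R \<le> f r0"
    using max R_pos by simp
  have "f r \<le> f r0" if "0 \<le> r" for r
  proof (cases "r \<le> R")
    case False
    then show ?thesis
      using tail_le[of r] \<open>f R \<le> f r0\<close> by simp
  qed (use max that in simp)
  moreover have "f r0 > 0"
    using \<open>f R > 0\<close> \<open>f R \<le> f r0\<close> by linarith
  ultimately have "radial_maximum d u u' R r0"
    using r0
    by (intro radial_maximum.intro radial_profile_axioms radial_maximum_axioms.intro) auto
  then show ?thesis ..
qed

lemma radial_Sobolev:
  assumes "m_total > 0"
  shows "J \<ge> d * (d - 2) / 4 * Cb powr (2 / d) * W powr ((d - 2) / d)"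
proof -
  obtain r0 where "radial_maximum d u u' R r0"
    using f_attains_max[OF assms] .
  then interpret radial_maximum d u u' R r0 .
  show ?thesis
    using AM_GM_eliminate_scale[OF d_gt_2 Cb_pos M_pos W_nonneg] J_ge_calibration
    unfolding \<gamma>_def \<kappa>_def by linarith
qed

lemma J_le_Holder: "J \<le> N powr ((d + 2) / (2 * d)) * W powr ((d - 2) / (2 * d))"
proof -
  define p where "p = 2 * d / (d + 2)"
  have p1: "p > 1" and q1: "q > 1"
    unfolding p_def q_def using d_gt_2 by (simp_all add: field_simps)
  have ip: "1 / p = (d + 2) / (2 * d)" and iq: "1 / q = (d - 2) / (2 * d)"
    unfolding p_def q_def by simp_all
  have pq: "1 / p + 1 / q = 1"
    unfolding ip iq using d_gt_2 by (simp add: field_simps)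
  have rho_split: "rho x powr (1 / p) * rho x powr (1 / q) = rho x" for x
    using pq rho_nonneg[of x] by (cases "rho x = 0") (simp_all flip: powr_add)
  have v_powr_p: "v x powr p = u x powr q" for x
  proof -
    have "(d + 2) / (d - 2) * p = q"
      unfolding p_def q_def using d_gt_2 by (auto simp: divide_simps)
    then show ?thesis
      unfolding v_def by (simp add: powr_powr)
  qed
  have "integral {0..R} (\<lambda>x. v x * rho x powr (1 / p) * (w x * rho x powr (1 / q)))
      \<le> (integral {0..R} (\<lambda>x. (v x * rho x powr (1 / p)) powr p)) powr (1 / p)
       * (integral {0..R} (\<lambda>x. (w x * rho x powr (1 / q)) powr q)) powr (1 / q)"
    using p1 q1 rho_nonneg
    by (intro Holder_inequality_continuous[OF p1 q1 pq] continuous_intros continuous_on_powr'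
        continuous_on_Icc_intros) (auto simp: v_nonneg w_nonneg)
  also have "integral {0..R} (\<lambda>x. (v x * rho x powr (1 / p)) powr p) = N"
    unfolding N_def using p1 rho_nonneg
    by (intro integral_cong) (simp add: powr_mult v_nonneg powr_powr v_powr_p)
  also have "integral {0..R} (\<lambda>x. (w x * rho x powr (1 / q)) powr q) = W"
    unfolding W_def using q1 rho_nonneg
    by (intro integral_cong) (simp add: powr_mult w_nonneg powr_powr)
  also have "integral {0..R} (\<lambda>x. v x * rho x powr (1 / p) * (w x * rho x powr (1 / q))) = J"
    unfolding J_def
  proof (rule integral_cong)
    fix x
    have "v x * rho x powr (1 / p) * (w x * rho x powr (1 / q))
        = v x * w x * (rho x powr (1 / p) * rho x powr (1 / q))"
      by (simp only: mult_ac)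
    then show "v x * rho x powr (1 / p) * (w x * rho x powr (1 / q)) = v x * w x * rho x"
      by (simp only: rho_split)
  qed
  finally show ?thesis
    unfolding ip iq .
qed

lemma J_eq_0_if_m_total_eq_0:
  assumes "m_total = 0"
  shows "J = 0"
proof -
  have "(h x)\<^sup>2 * rho x = 0" if "x \<in> {0..R}" for x
    using m_mono[of x R] m_nonneg[of x] that assms unfolding m_total_def h_def by simp
  then have "Dw R = integral {0..R} (\<lambda>x. 0)"
    unfolding Dw_def by (rule integral_cong)
  then have "Dw R = 0"
    by simp
  then show ?thesis
    using J_eq_Dw[of R] assms by simp
qed

lemma sd_eq: "sd d = 1 / (d * (d - 2) / 4 * Cb powr (2 / d))"
proof -
  have "(Gamma ((d + 1) / 2) / (sqrt pi * Gamma (d / 2))) powr (2 / d) = 1 / Cb powr (2 / d)"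
    unfolding Cb_def using Cb_pos Cb_def by (simp add: powr_divide)
  then show ?thesis
    unfolding sd_def by simp
qed

lemma first_inequality: "J \<le> sd d * N powr (1 + 2 / d)"
proof (cases "m_total = 0")
  case True
  then show ?thesis
    using J_eq_0_if_m_total_eq_0 sd_eq Cb_pos d_gt_2 N_nonneg by simp
next
  case False
  then have m_pos: "m_total > 0"
    using m_total_nonneg by simp
  define K where "K = d * (d - 2) / 4 * Cb powr (2 / d)"
  have K: "K > 0" "sd d = 1 / K"
    unfolding K_def sd_eq using d_gt_2 Cb_pos by simp_all
  have J_ge: "K * W powr ((d - 2) / d) \<le> J"
    using radial_Sobolev[OF m_pos] unfolding K_def .
  show ?thesis
  proof (cases "J > 0")
    case True
    have "J\<^sup>2 \<le> (N powr ((d + 2) / (2 * d)) * W powr ((d - 2) / (2 * d)))\<^sup>2"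
      using J_le_Holder True by (intro power_mono) auto
    also have "\<dots> = N powr ((d + 2) / d) * W powr ((d - 2) / d)"
      by (simp add: power_mult_distrib power2_eq_square field_simps flip: powr_add)
    also have "\<dots> \<le> N powr ((d + 2) / d) * (J / K)"
      using J_ge K by (intro mult_left_mono) (auto simp: field_simps)
    finally have "J * J \<le> N powr ((d + 2) / d) / K * J"
      by (simp add: power2_eq_square)
    then have "J \<le> N powr ((d + 2) / d) / K"
      using True mult_le_cancel_right_pos by blast
    moreover have "(d + 2) / d = 1 + 2 / d"
      using d_gt_2 by (simp add: field_simps)
    ultimately show ?thesis
      using K by simp
  next
    case False
    moreover have "0 \<le> sd d * N powr (1 + 2 / d)"
      using K by simp
    ultimately show ?thesis
      by linarith
  qed
qed

lemma u'_vanishes: "r > R \<Longrightarrow> u' r = 0"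
proof -
  assume r: "r > R"
  have "(u has_real_derivative u' r) (at r)"
    using u_deriv[of r] r R_pos at_within_interior[of r "{0..}"] by simp
  moreover have "(u has_real_derivative 0) (at r)"
    by (rule has_field_derivative_transform_within_open[of "\<lambda>_. 0" _ _ "{R<..}"])
       (use r u_vanishes in auto)
  ultimately show ?thesis
    by (rule DERIV_unique)
qed

lemma LINT_N_eq: "(LINT r:{0<..}|lborel. u r powr (2 * d / (d - 2)) * r powr (d - 1)) = N"
  unfolding N_def
proof (rule set_integral_Ioi_eq_integral_Icc[OF R_pos])
  show "continuous_on {0..R} (\<lambda>r. u r powr q * rho r)"
    by (intro continuous_on_mult continuous_on_Icc_intros)
qed (auto simp: q_def rho_def u_vanishes)

lemma LINT_J_eq: "(LINT r:{0<..}|lborel. v r * inv_lap d v r * r powr (d - 1)) = J"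
  unfolding J_def
proof (rule set_integral_Ioi_eq_integral_Icc[OF R_pos])
  show "continuous_on {0..R} (\<lambda>r. v r * w r * rho r)"
    by (intro continuous_on_mult continuous_on_Icc_intros)
qed (auto simp: inv_lap_eq rho_def v_vanishes)

lemma LINT_Du_eq: "(LINT r:{0<..}|lborel. (u' r)\<^sup>2 * r powr (d - 1)) = Du"
  unfolding Du_def
proof (rule set_integral_Ioi_eq_integral_Icc[OF R_pos])
  show "continuous_on {0..R} (\<lambda>r. (u' r)\<^sup>2 * rho r)"
    by (intro continuous_on_mult continuous_on_power continuous_on_Icc_intros)
qed (auto simp: rho_def u'_vanishes)

end

lemma radial_profile_of_smooth:
  fixes d :: real and u :: "real \<Rightarrow> real"
  assumes "d > 2" "smooth_halfline u" "compact_support_halfline u" "\<forall>r\<ge>0. u r \<ge> 0"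
  obtains u' R where "radial_profile d u u' R" and "\<And>r. r > 0 \<Longrightarrow> deriv u r = u' r"
proof -
  obtain D :: "nat \<Rightarrow> real \<Rightarrow> real" where D0: "\<And>x. x \<ge> 0 \<Longrightarrow> D 0 x = u x"
    and D: "\<And>n x. x \<ge> 0 \<Longrightarrow> (D n has_real_derivative D (Suc n) x) (at x within {0..})"
    using assms(2) unfolding smooth_halfline_def by blast
  obtain R where R: "\<And>r. r \<ge> R \<Longrightarrow> u r = 0"
    using assms(3) unfolding compact_support_halfline_def by blast
  have u_deriv: "(u has_real_derivative D 1 x) (at x within {0..})" if "x \<ge> 0" for x
    using D[of x 0] that
    by (auto intro: has_field_derivative_transform_within[OF _ zero_less_one] simp: D0)
  have "continuous_on {0..} (D 1)"
    unfolding continuous_on_eq_continuous_within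
    using D[of _ 1] DERIV_continuous by (metis atLeast_iff)
  then have "radial_profile d u (D 1) (max R 1)"
    using assms(1,4) u_deriv R by unfold_locales auto
  moreover have "deriv u r = D 1 r" if "r > 0" for r
    using u_deriv[of r] that at_within_interior[of r "{0..}"] by (auto intro: DERIV_imp_deriv)
  ultimately show ?thesis
    using that by blast
qed

theorem lemma3:
  fixes d :: real and u :: "real \<Rightarrow> real"
  assumes "d > 2"
    and "smooth_halfline u"
    and "compact_support_halfline u"
    and "\<forall>r\<ge>0. u r \<ge> 0"
  defines "v \<equiv> (\<lambda>r. u r powr ((d + 2) / (d - 2)))"
  defines "N \<equiv> (LINT r:{0<..}|lborel. u r powr (2 * d / (d - 2)) * r powr (d - 1))"
  defines "E \<equiv> sd d * N powr (1 + 2 / d)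
                - (LINT r:{0<..}|lborel. v r * inv_lap d v r * r powr (d - 1))"
  shows "0 \<le> E \<and>
         E \<le> sd d * N powr (4 / d) *
              (sd d * (LINT r:{0<..}|lborel. (deriv u r)\<^sup>2 * r powr (d - 1))
               - N powr ((d - 2) / d))"
proof -
  obtain u' R where profile: "radial_profile d u u' R"
    and deriv_u: "\<And>r. r > 0 \<Longrightarrow> deriv u r = u' r"
    using radial_profile_of_smooth[OF assms(1-4)] by blast
  interpret X: radial_profile d u u' R
    by (fact profile)
  have "v = X.v"
    unfolding v_def using X.v_def by (intro ext) simp
  have E: "E = sd d * X.N powr (1 + 2 / d) - X.J"
    unfolding E_def N_def X.LINT_N_eq \<open>v = X.v\<close> X.LINT_J_eq ..
  have "(LINT r:{0<..}|lborel. (deriv u r)\<^sup>2 * r powr (d - 1)) = X.Du"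
    using X.LINT_Du_eq set_lebesgue_integral_cong[of "{0<..}" lborel
        "\<lambda>r. (deriv u r)\<^sup>2 * r powr (d - 1)" "\<lambda>r. (u' r)\<^sup>2 * r powr (d - 1)"]
    by (simp add: deriv_u)
  moreover have "0 \<le> E"
    unfolding E using X.first_inequality by simp
  ultimately show ?thesis
    unfolding N_def X.LINT_N_eq using X.second_inequality unfolding E by simp
qed

end
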